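(* Let $a_1,\dots,a_n$ be positive integers and $\mathcal{G}=\mathcal{G}[a_1,\dots,a_n]$, and let $e_d$ be the last edge of this presentation of $\mathcal{G}$. (a) The reflection of $\mathcal{G}$ in the line $y=x$ is (a translate of) $\mathcal{G}[1,a_1-1,a_2,\dots,a_n]$; in particular $\mathcal{G}[a_1,\dots,a_n]\cong\mathcal{G}[1,a_1-1,a_2,\dots,a_n]$. (b) The reflection of $\mathcal{G}$ in the line $y=-x$ is (a translate of) $\mathcal{G}[1,a_n-1,a_{n-1},\dots,a_2,a_1]$ if $e_d$ is the north edge of the last tile, and of $\mathcal{G}[a_n,\dots,a_2,a_1]$ if $e_d$ is the east edge of the last tile. (c) The rotation of $\mathcal{G}$ by $180^\circ$ is (a translate of) $\mathcal{G}[a_n,\dots,a_2,a_1]$ if $e_d$ is the north edge of the last tile, and of $\mathcal{G}[1,a_n-1,a_{n-1},\dots,a_2,a_1]$ if $e_d$ is the east edge of the last tile.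
   Context: A tile is a unit square in the plane with sides parallel to the axes, viewed as a graph with 4 vertices and 4 edges. A snake graph with $d\ge1$ tiles is a planar graph which is the union of tiles $G_1,\dots,G_d$ with each $G_{i+1}$ the translate of $G_i$ by $(0,1)$ or $(1,0)$, so that $G_i,G_{i+1}$ share exactly one edge $e_i$; snake graphs are considered up to translation. A sign function on a snake graph is a map $f$ from edges to $\{+,-\}$ such that in each tile the north and west edges have the same sign, the south and east edges have the same sign, and north and south edges have opposite signs. For positive integers $a_1,\dots,a_n$ with $d=a_1+\dots+a_n-1\ge1$, $\mathcal{G}[a_1,\dots,a_n]$ is the unique snake graph with tiles $G_1,\dots,G_d$ admitting a sign function $f$ and an edge $e_d\in\{\text{north edge of }G_d,\text{east edge of }G_d\}$ such that, with $e_0$ the south edge of $G_1$ and $e_i$ ($1\le i\le d-1$) the edge shared by $G_i,G_{i+1}$, the sequence $(f(e_0),\dots,f(e_d))$ consists of $a_1$ copies of a sign $s$, then $a_2$ copies of $-s$, then $a_3$ copies of $s$, etc.; the edge $e_d$ is then uniquely determined by the sequence $(a_1,\dots,a_n)$ and is called the last edge of this presentation. Sequences with an entry equal to $0$ are interpreted via $[\dots,a,0,b,\dots]=[\dots,a+b,\dots]$ (e.g. $\mathcal{G}[1,0,b,\dots]=\mathcal{G}[1+b,\dots]$). *)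

theory Defs
  imports Main
begin

(* Lattice points and unit edges. An edge of the plane grid is the 2-element set
   of its endpoints. A tile is identified by its lower-left corner. *)
type_synonym pt = "int \<times> int"
type_synonym edge = "pt set"

fun south_edge :: "pt \<Rightarrow> edge" where
  "south_edge (x, y) = {(x, y), (x + 1, y)}"
fun north_edge :: "pt \<Rightarrow> edge" where
  "north_edge (x, y) = {(x, y + 1), (x + 1, y + 1)}"
fun west_edge :: "pt \<Rightarrow> edge" where
  "west_edge (x, y) = {(x, y), (x, y + 1)}"
fun east_edge :: "pt \<Rightarrow> edge" where
  "east_edge (x, y) = {(x + 1, y), (x + 1, y + 1)}"

definition tile_edges :: "pt \<Rightarrow> edge set" where
  "tile_edges p = {south_edge p, north_edge p, west_edge p, east_edge p}"

fun up :: "pt \<Rightarrow> pt" where "up (x, y) = (x, y + 1)"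
fun right :: "pt \<Rightarrow> pt" where "right (x, y) = (x + 1, y)"

definition snake_tiles :: "pt list \<Rightarrow> bool" where
  "snake_tiles ps \<longleftrightarrow> ps \<noteq> [] \<and>
     (\<forall>i. Suc i < length ps \<longrightarrow> ps ! Suc i = up (ps ! i) \<or> ps ! Suc i = right (ps ! i))"

(* The snake graph as a plane graph, given by its edge set (vertices = endpoints). *)
definition snake_edges :: "pt list \<Rightarrow> edge set" where
  "snake_edges ps = \<Union> (tile_edges ` set ps)"

definition sign_function :: "pt list \<Rightarrow> (edge \<Rightarrow> bool) \<Rightarrow> bool" where
  "sign_function ps f \<longleftrightarrow> (\<forall>p \<in> set ps.
     f (north_edge p) = f (west_edge p) \<and> f (south_edge p) = f (east_edge p) \<and>
     f (north_edge p) \<noteq> f (south_edge p))"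

(* e_i (1 <= i <= d-1): the edge shared by G_i = ps!(i-1) and G_{i+1} = ps!i *)
definition shared_edge :: "pt list \<Rightarrow> nat \<Rightarrow> edge" where
  "shared_edge ps i = (if ps ! i = up (ps ! (i - 1)) then north_edge (ps ! (i - 1))
                       else east_edge (ps ! (i - 1)))"

definition edge_seq :: "pt list \<Rightarrow> edge \<Rightarrow> edge list" where
  "edge_seq ps ed = south_edge (hd ps) # map (shared_edge ps) [1..<length ps] @ [ed]"

(* a_1 copies of s, then a_2 copies of -s, ...; zero entries automatically realize
   the convention [..,a,0,b,..] = [..,a+b,..] *)
fun sign_pattern :: "bool \<Rightarrow> nat list \<Rightarrow> bool list" where
  "sign_pattern s [] = []"
| "sign_pattern s (a # as) = replicate a s @ sign_pattern (\<not> s) as"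

definition presents :: "nat list \<Rightarrow> pt list \<Rightarrow> edge \<Rightarrow> bool" where
  "presents a ps ed \<longleftrightarrow> snake_tiles ps \<and> length ps = sum_list a - 1 \<and>
     ed \<in> {north_edge (last ps), east_edge (last ps)} \<and>
     (\<exists>f s. sign_function ps f \<and> map f (edge_seq ps ed) = sign_pattern s a)"

fun refl_diag :: "pt \<Rightarrow> pt" where "refl_diag (x, y) = (y, x)"
fun refl_antidiag :: "pt \<Rightarrow> pt" where "refl_antidiag (x, y) = (- y, - x)"
fun rot180 :: "pt \<Rightarrow> pt" where "rot180 (x, y) = (- x, - y)"

definition map_edges :: "(pt \<Rightarrow> pt) \<Rightarrow> edge set \<Rightarrow> edge set" where
  "map_edges g E = (\<lambda>e. g ` e) ` E"

end

theory Submission imports Defs begin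

text \<open>A sign function is forced to alternate from tile to tile, so along the edge sequence
  the sign at the k-th edge equals the alternating sign at position k, flipped exactly when that
  edge is an east edge. Conversely the checkerboard colouring of all grid edges is a sign
  function on every snake, so a snake presents [a1, ..., an] precisely when its sequence of
  north/east steps, read against the alternation, has block lengths a1, ..., an. Reflecting in
  y = x swaps north and east steps, which flips every entry except the first one (the south
  edge of the first tile); rotating by 180 degrees reverses the step sequence, and the
  reflection in y = -x reverses and swaps it. In each case the block structure of the new sign
  sequence is read off directly: either unchanged, reversed, or with its first entry flipped,
  which splits off a block of length 1.\<close>

lemma up_neq_right: "up p \<noteq> right p"
  by (cases p) auto

lemma north_edge_neq_east_edge: "north_edge p \<noteq> east_edge p"
  by (cases p) (auto simp: doubleton_eq_iff)

lemma south_edge_up: "south_edge (up p) = north_edge p"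
  by (cases p) auto

lemma west_edge_right: "west_edge (right p) = east_edge p"
  by (cases p) auto

lemma snake_tiles_nonempty: "snake_tiles ps \<Longrightarrow> ps \<noteq> []"
  by (simp add: snake_tiles_def)

lemma snake_tiles_step:
  "snake_tiles ps \<Longrightarrow> Suc i < length ps \<Longrightarrow> ps ! Suc i = up (ps ! i) \<or> ps ! Suc i = right (ps ! i)"
  unfolding snake_tiles_def by blast

lemma presents_nonempty: "presents a ps ed \<Longrightarrow> a \<noteq> []"
  by (auto simp: presents_def dest: snake_tiles_nonempty)

definition checkerboard :: "edge \<Rightarrow> bool" where
  "checkerboard e \<longleftrightarrow>
     (\<exists>x y. (e = south_edge (x, y) \<and> even (x + y)) \<or> (e = west_edge (x, y) \<and> odd (x + y)))"

lemma checkerboard_south_edge: "checkerboard (south_edge (x, y)) = even (x + y)"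
  unfolding checkerboard_def by (auto simp: doubleton_eq_iff)

lemma checkerboard_west_edge: "checkerboard (west_edge (x, y)) = odd (x + y)"
  unfolding checkerboard_def by (auto simp: doubleton_eq_iff)

lemma checkerboard_north_edge: "checkerboard (north_edge (x, y)) = odd (x + y)"
proof -
  have "north_edge (x, y) = south_edge (x, y + 1)" by simp
  then show ?thesis by (simp only: checkerboard_south_edge) presburger
qed

lemma checkerboard_east_edge: "checkerboard (east_edge (x, y)) = even (x + y)"
proof -
  have "east_edge (x, y) = west_edge (x + 1, y)" by simp
  then show ?thesis by (simp only: checkerboard_west_edge) (simp add: ac_simps)
qed

lemma sign_function_checkerboard: "sign_function ps (\<lambda>e. c \<noteq> checkerboard e)"
  unfolding sign_function_def
proof
  fix p :: pt
  obtain x y where p: "p = (x, y)" by (cases p)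
  show "(c \<noteq> checkerboard (north_edge p)) = (c \<noteq> checkerboard (west_edge p)) \<and>
      (c \<noteq> checkerboard (south_edge p)) = (c \<noteq> checkerboard (east_edge p)) \<and>
      (c \<noteq> checkerboard (north_edge p)) \<noteq> (c \<noteq> checkerboard (south_edge p))"
    unfolding p checkerboard_north_edge checkerboard_west_edge
      checkerboard_south_edge checkerboard_east_edge by simp
qed

subsection \<open>Sign sequences are determined by the north steps\<close>

text \<open>Whether the k-th edge of the edge sequence is a north edge; the 0-th edge, the south edge
  of the first tile, counts as one (it is the north edge of the tile below).\<close>

definition north_step :: "pt list \<Rightarrow> edge \<Rightarrow> nat \<Rightarrow> bool" where
  "north_step ps ed k =
     (if k = 0 then True
      else if k < length ps then ps ! k = up (ps ! (k - 1))
      else ed = north_edge (last ps))"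

definition sign_word :: "bool \<Rightarrow> pt list \<Rightarrow> edge \<Rightarrow> bool list" where
  "sign_word \<sigma> ps ed = map (\<lambda>k. (\<sigma> \<noteq> odd k) = north_step ps ed k) [0..<Suc (length ps)]"

lemma length_sign_word [simp]: "length (sign_word \<sigma> ps ed) = Suc (length ps)"
  by (simp add: sign_word_def)

lemma sign_word_neq_Nil [simp]: "sign_word \<sigma> ps ed \<noteq> []"
  by (simp add: sign_word_def)

lemma sign_word_nth:
  "k \<le> length ps \<Longrightarrow> sign_word \<sigma> ps ed ! k = ((\<sigma> \<noteq> odd k) = north_step ps ed k)"
  unfolding sign_word_def by (simp del: upt_Suc)

lemma sign_function_tile:
  assumes "sign_function ps f" and "i < length ps"
  shows "f (north_edge (ps ! i)) = (\<not> f (south_edge (ps ! i)))"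
    and "f (east_edge (ps ! i)) = f (south_edge (ps ! i))"
    and "f (west_edge (ps ! i)) = (\<not> f (south_edge (ps ! i)))"
  using assms nth_mem[OF assms(2)] unfolding sign_function_def by metis+

lemma sign_function_south_edge_nth:
  assumes sn: "snake_tiles ps" and sf: "sign_function ps f" and "i < length ps"
  shows "f (south_edge (ps ! i)) = (f (south_edge (hd ps)) \<noteq> odd i)"
  using \<open>i < length ps\<close>
proof (induction i)
  case 0
  then show ?case using snake_tiles_nonempty[OF sn] by (simp add: hd_conv_nth)
next
  case (Suc i)
  have "f (south_edge (ps ! Suc i)) = (\<not> f (south_edge (ps ! i)))"
    using snake_tiles_step[OF sn Suc.prems]
  proof
    assume "ps ! Suc i = up (ps ! i)"
    then show ?thesis using sign_function_tile(1)[OF sf, of i] Suc.prems by (simp add: south_edge_up)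
  next
    assume "ps ! Suc i = right (ps ! i)"
    then show ?thesis
      using sign_function_tile(2)[OF sf, of i] sign_function_tile(3)[OF sf Suc.prems] Suc.prems
      by (simp add: west_edge_right)
  qed
  then show ?case using Suc by simp
qed

lemma length_edge_seq: "ps \<noteq> [] \<Longrightarrow> length (edge_seq ps ed) = Suc (length ps)"
  by (simp add: edge_seq_def)

lemma edge_seq_nth:
  assumes "ps \<noteq> []" and "k \<le> length ps"
  shows "edge_seq ps ed ! k =
    (if k = 0 then south_edge (hd ps) else if k < length ps then shared_edge ps k else ed)"
  using assms by (cases k) (auto simp: edge_seq_def nth_append)

lemma map_edge_seq_eq_sign_word:
  assumes sn: "snake_tiles ps" and sf: "sign_function ps f"
    and ed: "ed \<in> {north_edge (last ps), east_edge (last ps)}"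
  shows "map f (edge_seq ps ed) = sign_word (f (south_edge (hd ps))) ps ed"
proof (rule nth_equalityI)
  have ne: "ps \<noteq> []" using snake_tiles_nonempty[OF sn] .
  then show "length (map f (edge_seq ps ed)) = length (sign_word (f (south_edge (hd ps))) ps ed)"
    by (simp add: length_edge_seq)
  fix k assume "k < length (map f (edge_seq ps ed))"
  then have k: "k \<le> length ps" using ne by (simp add: length_edge_seq)
  have lhs: "map f (edge_seq ps ed) ! k = f (edge_seq ps ed ! k)"
    using k ne by (simp add: length_edge_seq)
  show "map f (edge_seq ps ed) ! k = sign_word (f (south_edge (hd ps))) ps ed ! k"
  proof (cases k)
    case 0
    then show ?thesis using lhs edge_seq_nth[OF ne k] sign_word_nth[OF k] by (simp add: north_step_def)
  next
    case (Suc m)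
    then have m: "m < length ps" using k by simp
    note south = sign_function_south_edge_nth[OF sn sf m]
    show ?thesis
    proof (cases "k < length ps")
      case True
      then show ?thesis
        using lhs edge_seq_nth[OF ne k] sign_word_nth[OF k] Suc south sign_function_tile[OF sf m]
        by (auto simp: north_step_def shared_edge_def)
    next
      case False
      then have "m = length ps - 1" using k Suc by simp
      then have "last ps = ps ! m" using ne by (simp add: last_conv_nth)
      then show ?thesis
        using False lhs edge_seq_nth[OF ne k] sign_word_nth[OF k] Suc south
          sign_function_tile[OF sf m] ed north_edge_neq_east_edge[of "ps ! m"]
        by (auto simp: north_step_def)
    qed
  qed
qed

lemma presents_iff_sign_word:
  "presents a ps ed \<longleftrightarrow> snake_tiles ps \<and> length ps = sum_list a - 1 \<and>
     ed \<in> {north_edge (last ps), east_edge (last ps)} \<and>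
     (\<exists>\<sigma> s. sign_word \<sigma> ps ed = sign_pattern s a)"
proof
  assume "presents a ps ed"
  then show "snake_tiles ps \<and> length ps = sum_list a - 1 \<and>
      ed \<in> {north_edge (last ps), east_edge (last ps)} \<and>
      (\<exists>\<sigma> s. sign_word \<sigma> ps ed = sign_pattern s a)"
    unfolding presents_def using map_edge_seq_eq_sign_word by metis
next
  assume A: "snake_tiles ps \<and> length ps = sum_list a - 1 \<and>
      ed \<in> {north_edge (last ps), east_edge (last ps)} \<and>
      (\<exists>\<sigma> s. sign_word \<sigma> ps ed = sign_pattern s a)"
  then obtain \<sigma> s where w: "sign_word \<sigma> ps ed = sign_pattern s a" by blast
  define c where "c = (\<sigma> \<noteq> checkerboard (south_edge (hd ps)))"
  have sf: "sign_function ps (\<lambda>e. c \<noteq> checkerboard e)"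
    by (rule sign_function_checkerboard)
  have "(c \<noteq> checkerboard (south_edge (hd ps))) = \<sigma>"
    by (cases \<sigma>) (simp_all add: c_def)
  then have "map (\<lambda>e. c \<noteq> checkerboard e) (edge_seq ps ed) = sign_pattern s a"
    using map_edge_seq_eq_sign_word[OF _ sf] A w by simp
  then show "presents a ps ed"
    unfolding presents_def using A sf by blast
qed

definition flip_hd :: "bool list \<Rightarrow> bool list" where
  "flip_hd xs = (\<not> hd xs) # tl xs"

lemma sign_pattern_append:
  "sign_pattern s (xs @ ys) =
     sign_pattern s xs @ sign_pattern (if even (length xs) then s else \<not> s) ys"
  by (induction xs arbitrary: s) auto

lemma rev_sign_pattern:
  "rev (sign_pattern s a) = sign_pattern (if even (length a) then \<not> s else s) (rev a)"
  by (induction a arbitrary: s) (auto simp: sign_pattern_append)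

lemma flip_hd_sign_pattern:
  "x > 0 \<Longrightarrow> flip_hd (sign_pattern s (x # xs)) = sign_pattern (\<not> s) (1 # (x - 1) # xs)"
  by (cases x) (auto simp: flip_hd_def)

lemma eq_flip_hdI:
  assumes "length ys = length xs" and "xs \<noteq> []" and "ys ! 0 = (\<not> xs ! 0)"
    and "\<And>k. 0 < k \<Longrightarrow> k < length xs \<Longrightarrow> ys ! k = xs ! k"
  shows "ys = flip_hd xs"
  using assms by (intro nth_equalityI) (auto simp: flip_hd_def hd_conv_nth nth_tl nth_Cons split: nat.splits)

subsection \<open>Reflection in the diagonal\<close>

lemma snake_edges_map:
  assumes "\<And>p. (\<lambda>e. g ` e) ` tile_edges p = tile_edges (t p)"
  shows "snake_edges (map t ps) = map_edges g (snake_edges ps)"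
  by (simp add: snake_edges_def map_edges_def image_Union image_image assms)

lemma tile_edges_refl_diag: "(\<lambda>e. refl_diag ` e) ` tile_edges p = tile_edges (refl_diag p)"
  by (cases p) (auto simp: tile_edges_def)

lemma refl_diag_eq_up_iff: "refl_diag p = up (refl_diag q) \<longleftrightarrow> p = right q"
  by (cases p; cases q) auto

lemma refl_diag_eq_right_iff: "refl_diag p = right (refl_diag q) \<longleftrightarrow> p = up q"
  by (cases p; cases q) auto

lemma snake_tiles_map_refl_diag: "snake_tiles ps \<Longrightarrow> snake_tiles (map refl_diag ps)"
  unfolding snake_tiles_def by (auto simp: refl_diag_eq_up_iff refl_diag_eq_right_iff)

definition swap_last_edge :: "pt list \<Rightarrow> pt list \<Rightarrow> edge \<Rightarrow> edge" where
  "swap_last_edge ps qs ed =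
     (if ed = north_edge (last ps) then east_edge (last qs) else north_edge (last qs))"

lemma north_step_map_refl_diag:
  assumes sn: "snake_tiles ps" and k: "0 < k" "k \<le> length ps"
  shows "north_step (map refl_diag ps) (swap_last_edge ps (map refl_diag ps) ed) k
           = (\<not> north_step ps ed k)"
proof (cases "k < length ps")
  case True
  then obtain i where i: "k = Suc i" using k by (cases k) auto
  then show ?thesis
    using True snake_tiles_step[OF sn, of i] up_neq_right[of "ps ! i"]
    by (auto simp: north_step_def refl_diag_eq_up_iff)
next
  case False
  then show ?thesis
    using k north_edge_neq_east_edge[of "last (map refl_diag ps)"]
    by (auto simp: north_step_def swap_last_edge_def)
qed

lemma presents_map_refl_diag:
  assumes G: "presents a ps ed" and pos: "hd a > 0"
  shows "presents (1 # (hd a - 1) # tl a) (map refl_diag ps) (swap_last_edge ps (map refl_diag ps) ed)"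
proof -
  let ?qs = "map refl_diag ps" and ?ed = "swap_last_edge ps (map refl_diag ps) ed"
  obtain \<sigma> s where sn: "snake_tiles ps" and len: "length ps = sum_list a - 1"
    and w: "sign_word \<sigma> ps ed = sign_pattern s a"
    using G unfolding presents_iff_sign_word by blast
  obtain x xs where a: "a = x # xs" using presents_nonempty[OF G] by (cases a) auto
  have "sign_word (\<not> \<sigma>) ?qs ?ed = flip_hd (sign_word \<sigma> ps ed)"
    using north_step_map_refl_diag[OF sn]
    by (intro eq_flip_hdI) (auto simp: sign_word_nth north_step_def simp del: upt_Suc)
  also have "\<dots> = sign_pattern (\<not> s) (1 # (hd a - 1) # tl a)"
    using w flip_hd_sign_pattern pos a by simp
  finally have "sign_word (\<not> \<sigma>) ?qs ?ed = sign_pattern (\<not> s) (1 # (hd a - 1) # tl a)" .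
  moreover have "?ed \<in> {north_edge (last ?qs), east_edge (last ?qs)}"
    by (simp add: swap_last_edge_def)
  moreover have "length ?qs = sum_list (1 # (hd a - 1) # tl a) - 1"
    using len pos a by simp
  ultimately show ?thesis
    unfolding presents_iff_sign_word using snake_tiles_map_refl_diag[OF sn] by blast
qed

subsection \<open>Reversing symmetries\<close>

lemma odd_diff_nat: "k \<le> n \<Longrightarrow> odd ((n::nat) - k) = (odd n \<noteq> odd k)"
  by (metis le_add_diff_inverse odd_add)

lemma sign_word_reverse:
  assumes len: "length qs = length ps"
    and steps: "\<And>k. 0 < k \<Longrightarrow> k \<le> length ps \<Longrightarrow>
                  north_step qs ed' k = (b \<noteq> north_step ps ed (length ps - k))"
  shows "sign_word ((\<sigma> \<noteq> odd (length ps)) \<noteq> b) qs ed' =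
    (if north_step ps ed (length ps) = b then flip_hd (rev (sign_word \<sigma> ps ed))
     else rev (sign_word \<sigma> ps ed))"
proof -
  let ?L = "length ps" and ?w = "sign_word \<sigma> ps ed"
  let ?v = "sign_word ((\<sigma> \<noteq> odd ?L) \<noteq> b) qs ed'"
  have rev_nth_w: "rev ?w ! k = ((\<sigma> \<noteq> odd (?L - k)) = north_step ps ed (?L - k))" if "k \<le> ?L" for k
    using that by (simp add: rev_nth sign_word_nth)
  have tail: "?v ! k = rev ?w ! k" if "0 < k" "k \<le> ?L" for k
    using that len by (simp add: sign_word_nth rev_nth_w steps odd_diff_nat) blast
  have head: "?v ! 0 = (rev ?w ! 0 \<noteq> (north_step ps ed ?L = b))"
    using len by (simp add: sign_word_nth rev_nth_w north_step_def) blast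
  show ?thesis
  proof (cases "north_step ps ed ?L = b")
    case True
    have "?v = flip_hd (rev ?w)"
      using len head True tail by (intro eq_flip_hdI) auto
    then show ?thesis using True by simp
  next
    case False
    have "?v = rev ?w"
      using len head False tail by (intro nth_equalityI) (auto simp: less_Suc_eq_0_disj)
    then show ?thesis using False by simp
  qed
qed

text \<open>A symmetry of the plane reversing the direction of travel along a snake, given by its
  action t on lower-left corners of tiles; b says whether it swaps north and east steps.\<close>

locale reversing_symmetry =
  fixes g :: "pt \<Rightarrow> pt" and t :: "pt \<Rightarrow> pt" and b :: bool
  assumes tile_edges_image: "(\<lambda>e. g ` e) ` tile_edges p = tile_edges (t p)"
    and image_up_step: "t p = up (t (if b then right p else up p))"
    and image_right_step: "t p = right (t (if b then up p else right p))"
begin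

lemma image_step:
  assumes "q = up p \<or> q = right p"
  shows "t p = up (t q) \<or> t p = right (t q)"
    and "t p = up (t q) \<longleftrightarrow> b \<noteq> (q = up p)"
  using assms image_up_step[of p] image_right_step[of p] up_neq_right[of "t q"] up_neq_right[of p]
  by (cases b; auto)+

lemma snake_tiles_rev_map: "snake_tiles ps \<Longrightarrow> snake_tiles (rev (map t ps))"
  unfolding snake_tiles_def
proof (intro conjI allI impI)
  assume sn: "ps \<noteq> [] \<and> (\<forall>i. Suc i < length ps \<longrightarrow> ps ! Suc i = up (ps ! i) \<or> ps ! Suc i = right (ps ! i))"
  then show "rev (map t ps) \<noteq> []" by simp
  fix i assume i: "Suc i < length (rev (map t ps))"
  define j where "j = length ps - Suc (Suc i)"
  have "rev (map t ps) ! Suc i = t (ps ! j)" "rev (map t ps) ! i = t (ps ! Suc j)" "Suc j < length ps"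
    using i by (simp_all add: rev_nth j_def Suc_diff_Suc)
  then show "rev (map t ps) ! Suc i = up (rev (map t ps) ! i) \<or>
      rev (map t ps) ! Suc i = right (rev (map t ps) ! i)"
    using sn image_step(1) by simp
qed

lemma north_step_rev_map:
  assumes sn: "snake_tiles ps" and k: "0 < k" "k \<le> length ps"
  defines "qs \<equiv> rev (map t ps)"
  shows "north_step qs (if b then east_edge (last qs) else north_edge (last qs)) k
           = (b \<noteq> north_step ps ed (length ps - k))"
proof (cases "k < length ps")
  case True
  then obtain j where j: "length ps - k = Suc j" by (cases "length ps - k") auto
  then have "length ps - Suc k = j" by arith
  with j have "qs ! k = t (ps ! j)" "qs ! (k - 1) = t (ps ! Suc j)" "Suc j < length ps"
    using True k by (simp_all add: qs_def rev_nth)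
  then show ?thesis
    using True k j image_step(2) snake_tiles_step[OF sn] by (simp add: north_step_def qs_def)
next
  case False
  then show ?thesis using k north_edge_neq_east_edge[of "last qs"]
    by (auto simp: north_step_def qs_def)
qed

lemma presents_rev_map:
  assumes G: "presents a ps ed" and pos: "last a > 0"
  shows "\<exists>qs ed'. presents (if (ed = north_edge (last ps)) = b then 1 # (last a - 1) # tl (rev a)
                              else rev a) qs ed'
          \<and> snake_edges qs = map_edges g (snake_edges ps)"
proof -
  let ?qs = "rev (map t ps)"
  let ?ed = "if b then east_edge (last ?qs) else north_edge (last ?qs)"
  define flip where "flip \<longleftrightarrow> (ed = north_edge (last ps)) = b"
  define a' where "a' = (if flip then 1 # (last a - 1) # tl (rev a) else rev a)"
  obtain \<sigma> s where sn: "snake_tiles ps" and len: "length ps = sum_list a - 1"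
    and ed: "ed \<in> {north_edge (last ps), east_edge (last ps)}"
    and w: "sign_word \<sigma> ps ed = sign_pattern s a"
    using G unfolding presents_iff_sign_word by blast
  obtain u where u: "rev (sign_word \<sigma> ps ed) = sign_pattern u (rev a)"
    using w rev_sign_pattern by metis
  have ra: "rev a = last a # tl (rev a)"
    using presents_nonempty[OF G] by (cases "rev a") (auto simp flip: hd_rev)
  have "north_step ps ed (length ps) = (ed = north_edge (last ps))"
    using snake_tiles_nonempty[OF sn] north_edge_neq_east_edge[of "last ps"] ed
    by (auto simp: north_step_def)
  then have "sign_word ((\<sigma> \<noteq> odd (length ps)) \<noteq> b) ?qs ?ed =
      (if flip then flip_hd (sign_pattern u (rev a)) else sign_pattern u (rev a))"
    using sign_word_reverse[of ?qs ps ?ed b ed \<sigma>] north_step_rev_map[OF sn] u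
    by (simp add: flip_def)
  also have "\<dots> = sign_pattern (if flip then \<not> u else u) a'"
    using flip_hd_sign_pattern[OF pos, of u "tl (rev a)"] ra by (simp add: a'_def)
  finally have "\<exists>\<sigma> s. sign_word \<sigma> ?qs ?ed = sign_pattern s a'" by blast
  moreover have "sum_list a' = sum_list a"
    using arg_cong[OF ra, of sum_list] pos by (simp add: a'_def)
  ultimately have "presents a' ?qs ?ed"
    unfolding presents_iff_sign_word using snake_tiles_rev_map[OF sn] len by auto
  moreover have "snake_edges ?qs = map_edges g (snake_edges ps)"
    using snake_edges_map[of g t ps] tile_edges_image by (simp add: snake_edges_def)
  ultimately show ?thesis unfolding a'_def flip_def by blast
qed

end

text \<open>The lower-left corner of the image of the tile with lower-left corner p.\<close>

fun rot180_tile :: "pt \<Rightarrow> pt" where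
  "rot180_tile (x, y) = (- x - 1, - y - 1)"

fun refl_antidiag_tile :: "pt \<Rightarrow> pt" where
  "refl_antidiag_tile (x, y) = (- y - 1, - x - 1)"

lemma tile_edges_rot180: "(\<lambda>e. rot180 ` e) ` tile_edges p = tile_edges (rot180_tile p)"
  by (cases p) (auto simp: tile_edges_def)

lemma tile_edges_refl_antidiag:
  "(\<lambda>e. refl_antidiag ` e) ` tile_edges p = tile_edges (refl_antidiag_tile p)"
  by (cases p) (auto simp: tile_edges_def)

interpretation rot180: reversing_symmetry rot180 rot180_tile False
proof
  fix p :: pt
  show "(\<lambda>e. rot180 ` e) ` tile_edges p = tile_edges (rot180_tile p)" by (rule tile_edges_rot180)
  show "rot180_tile p = up (rot180_tile (if False then right p else up p))" by (cases p) simp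
  show "rot180_tile p = right (rot180_tile (if False then up p else right p))" by (cases p) simp
qed

interpretation refl_antidiag: reversing_symmetry refl_antidiag refl_antidiag_tile True
proof
  fix p :: pt
  show "(\<lambda>e. refl_antidiag ` e) ` tile_edges p = tile_edges (refl_antidiag_tile p)"
    by (rule tile_edges_refl_antidiag)
  show "refl_antidiag_tile p = up (refl_antidiag_tile (if True then right p else up p))"
    by (cases p) simp
  show "refl_antidiag_tile p = right (refl_antidiag_tile (if True then up p else right p))"
    by (cases p) simp
qed

theorem proposition3p1:
  fixes a :: "nat list" and ps :: "pt list" and ed :: edge
  assumes pos: "\<forall>x \<in> set a. x > 0"
    and d: "sum_list a - 1 \<ge> 1"
    and G: "presents a ps ed"
  shows
    "(\<exists>qs ed'. presents (1 # (hd a - 1) # tl a) qs ed' \<and>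
        snake_edges qs = map_edges refl_diag (snake_edges ps))
   \<and> (ed = north_edge (last ps) \<longrightarrow>
        (\<exists>qs ed'. presents (1 # (last a - 1) # tl (rev a)) qs ed' \<and>
           snake_edges qs = map_edges refl_antidiag (snake_edges ps)))
   \<and> (ed = east_edge (last ps) \<longrightarrow>
        (\<exists>qs ed'. presents (rev a) qs ed' \<and>
           snake_edges qs = map_edges refl_antidiag (snake_edges ps)))
   \<and> (ed = north_edge (last ps) \<longrightarrow>
        (\<exists>qs ed'. presents (rev a) qs ed' \<and>
           snake_edges qs = map_edges rot180 (snake_edges ps)))
   \<and> (ed = east_edge (last ps) \<longrightarrow>
        (\<exists>qs ed'. presents (1 # (last a - 1) # tl (rev a)) qs ed' \<and>
           snake_edges qs = map_edges rot180 (snake_edges ps)))"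
proof -
  have "a \<noteq> []" using presents_nonempty[OF G] .
  then have pos_hd: "hd a > 0" and pos_last: "last a > 0" using pos by simp_all
  have diag: "\<exists>qs ed'. presents (1 # (hd a - 1) # tl a) qs ed' \<and>
      snake_edges qs = map_edges refl_diag (snake_edges ps)"
    using presents_map_refl_diag[OF G pos_hd] snake_edges_map[OF tile_edges_refl_diag] by blast
  have "east_edge (last ps) \<noteq> north_edge (last ps)"
    using north_edge_neq_east_edge by metis
  then show ?thesis
    using diag rot180.presents_rev_map[OF G pos_last] refl_antidiag.presents_rev_map[OF G pos_last]
    by (cases "ed = north_edge (last ps)") simp_all
qed

end
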